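(* Let $\mathcal{C}$ be an optimum distance flag code of type $(t_1,\ldots,t_r)$ on $\mathbb{F}_q^n$. Then for every $i\in\{1,\ldots,r\}$ the $i$-projected code $\mathcal{C}_i$ satisfies $d_S(\mathcal{C}_i)=\min\{2t_i,2(n-t_i)\}$.
   Context: $q$ is a prime power, $n>1$. For subspaces $\mathcal{U},\mathcal{V}$ of $\mathbb{F}_q^n$, $d_S(\mathcal{U},\mathcal{V})=\dim(\mathcal{U}+\mathcal{V})-\dim(\mathcal{U}\cap\mathcal{V})$; for a set $\mathcal{D}$ of subspaces, $d_S(\mathcal{D})$ is the minimum of $d_S$ over pairs of distinct elements (and $d_S(\mathcal{D})=0$ if $|\mathcal{D}|=1$). A flag of type $(t_1,\ldots,t_r)$, $0<t_1<\cdots<t_r<n$, is a tuple $(\mathcal{F}_1,\ldots,\mathcal{F}_r)$ of nested subspaces $\mathcal{F}_1\subsetneq\cdots\subsetneq\mathcal{F}_r$ of $\mathbb{F}_q^n$ with $\dim\mathcal{F}_i=t_i$. A flag code of that type is a set of at least two such flags; its distance $d_f(\mathcal{C})$ is the minimum over distinct $\mathcal{F},\mathcal{F}'\in\mathcal{C}$ of $\sum_{i=1}^r d_S(\mathcal{F}_i,\mathcal{F}'_i)$. The code is an optimum distance flag code if $d_f(\mathcal{C})= 2\left(\sum_{t_i \leq \lfloor n/2\rfloor} t_i + \sum_{t_i > \lfloor n/2\rfloor} (n-t_i)\right)$. The $i$-projected code is $\mathcal{C}_i=\{\mathcal{F}_i : (\mathcal{F}_1,\ldots,\mathcal{F}_r)\in\mathcal{C}\}$.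 *)

theory Defs
  imports "HOL-Analysis.Analysis"
begin

text \<open>Vectors of F_q^n are modelled as 'a ^ 'n with 'a a finite field and
CARD('n) = n; subspaces, span and dimension are those of the library
vector space interpretation vec (scalar multiplication (*s)).\<close>

definition subspace_dist :: "('a::field ^ 'n) set \<Rightarrow> ('a ^ 'n) set \<Rightarrow> nat" where
  "subspace_dist U V = vec.dim (vec.span (U \<union> V)) - vec.dim (U \<inter> V)"

definition set_subspace_dist :: "('a::field ^ 'n) set set \<Rightarrow> nat" where
  "set_subspace_dist D =
     (if \<exists>U\<in>D. \<exists>V\<in>D. U \<noteq> V
      then Min {subspace_dist U V | U V. U \<in> D \<and> V \<in> D \<and> U \<noteq> V}
      else 0)"

definition flag_type :: "nat \<Rightarrow> nat list \<Rightarrow> bool" where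
  "flag_type n ts \<longleftrightarrow> ts \<noteq> [] \<and> sorted_wrt (<) ts \<and> (\<forall>i<length ts. 0 < ts ! i \<and> ts ! i < n)"

definition is_flag :: "nat list \<Rightarrow> ('a::field ^ 'n) set list \<Rightarrow> bool" where
  "is_flag ts F \<longleftrightarrow> length F = length ts
     \<and> (\<forall>i<length ts. vec.subspace (F ! i) \<and> vec.dim (F ! i) = ts ! i)
     \<and> (\<forall>i. Suc i < length ts \<longrightarrow> F ! i \<subset> F ! Suc i)"

definition flag_code :: "nat list \<Rightarrow> ('a::field ^ 'n) set list set \<Rightarrow> bool" where
  "flag_code ts C \<longleftrightarrow> flag_type CARD('n) ts \<and> (\<forall>F\<in>C. is_flag ts F)
     \<and> (\<exists>F\<in>C. \<exists>G\<in>C. F \<noteq> G)"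

definition flag_dist :: "nat list \<Rightarrow> ('a::field ^ 'n) set list \<Rightarrow> ('a ^ 'n) set list \<Rightarrow> nat" where
  "flag_dist ts F G = (\<Sum>i<length ts. subspace_dist (F ! i) (G ! i))"

definition code_dist :: "nat list \<Rightarrow> ('a::field ^ 'n) set list set \<Rightarrow> nat" where
  "code_dist ts C = Min {flag_dist ts F G | F G. F \<in> C \<and> G \<in> C \<and> F \<noteq> G}"

definition optimum_distance_flag_code :: "nat list \<Rightarrow> ('a::field ^ 'n) set list set \<Rightarrow> bool" where
  "optimum_distance_flag_code ts C \<longleftrightarrow> flag_code ts C \<and>
     code_dist ts C = 2 * (\<Sum>i<length ts.
        if ts ! i \<le> CARD('n) div 2 then ts ! i else CARD('n) - ts ! i)"

definition projected_code :: "('a ^ 'n) set list set \<Rightarrow> nat \<Rightarrow> ('a ^ 'n) set set" where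
  "projected_code C i = (\<lambda>F. F ! i) ` C"

end

theory Submission
  imports Defs
begin

text \<open>Grassmann's formula gives d_S(U,V) = 2 t - 2 dim(U \<inter> V) = 2 dim(U + V) - 2 t for two
t-dimensional subspaces, so d_S(U,V) \<le> 2 min(t, n - t), and the optimum flag distance is the sum
of these bounds over the components. Hence two distinct flags of an optimum distance code attain
the bound in every component; in particular their i-th subspaces differ, and every pair of
distinct subspaces of the projected code is at distance exactly 2 min(t_i, n - t_i).\<close>

lemma subspace_dist_self:
  fixes U :: "('a::field ^ 'n) set"
  assumes "vec.subspace U"
  shows "subspace_dist U U = 0"
  using assms by (simp add: subspace_dist_def vec.span_eq_iff)

lemma subspace_dist_le:
  fixes U V :: "('a::field ^ 'n) set"
  assumes "vec.subspace U" "vec.subspace V" "vec.dim U = t" "vec.dim V = t"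
  shows "subspace_dist U V \<le> 2 * min t (CARD('n) - t)"
proof -
  have span_U: "vec.span U = U" and span_V: "vec.span V = V"
    using assms(1,2) by (simp_all add: vec.span_eq_iff)
  have "vec.span (U \<union> V) = {x + y |x y. x \<in> U \<and> y \<in> V}"
    using vec.span_Un[of U V] unfolding span_U span_V .
  then have grassmann: "vec.dim (vec.span (U \<union> V)) + vec.dim (U \<inter> V) = 2 * t"
    using vec.dim_sums_Int[OF assms(1,2)] assms(3,4) by simp
  have "vec.dim (vec.span (U \<union> V)) \<le> CARD('n)"
    using vec.dim_subset_UNIV[of "vec.span (U \<union> V)"]
    by (simp add: vec.dimension_def card_cart_basis)
  with grassmann show ?thesis
    unfolding subspace_dist_def by linarith
qed

lemma min_complement_eq_if: "min t (n - t) = (if t \<le> n div 2 then t else n - t)"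
  for t n :: nat
  by auto

lemma is_flag_subspace_dist_le:
  fixes F G :: "('a::field ^ 'n) set list"
  assumes "is_flag ts F" "is_flag ts G" "j < length ts"
  shows "subspace_dist (F ! j) (G ! j) \<le> 2 * min (ts ! j) (CARD('n) - ts ! j)"
  using assms by (intro subspace_dist_le) (auto simp: is_flag_def)

lemma finite_flag_code:
  fixes C :: "('a::{finite,field} ^ 'n) set list set"
  assumes "flag_code ts C"
  shows "finite C"
proof (rule finite_subset)
  show "C \<subseteq> {F. set F \<subseteq> UNIV \<and> length F = length ts}"
    using assms by (auto simp: flag_code_def is_flag_def)
qed (rule finite_lists_length_eq, simp)

lemma code_dist_le_flag_dist:
  assumes "finite C" "F \<in> C" "G \<in> C" "F \<noteq> G"
  shows "code_dist ts C \<le> flag_dist ts F G"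
proof -
  have "{flag_dist ts F G | F G. F \<in> C \<and> G \<in> C \<and> F \<noteq> G}
      \<subseteq> (\<lambda>(F, G). flag_dist ts F G) ` (C \<times> C)"
    by auto
  moreover have "finite ((\<lambda>(F, G). flag_dist ts F G) ` (C \<times> C))"
    using assms(1) by simp
  ultimately have "finite {flag_dist ts F G | F G. F \<in> C \<and> G \<in> C \<and> F \<noteq> G}"
    by (rule finite_subset)
  then show ?thesis
    unfolding code_dist_def using assms(2-4) by (intro Min_le) auto
qed

lemma optimum_distance_flag_code_subspace_dist:
  fixes C :: "('a::{finite,field} ^ 'n) set list set"
  assumes opt: "optimum_distance_flag_code ts C"
    and "F \<in> C" "G \<in> C" "F \<noteq> G" "j < length ts"
  shows "subspace_dist (F ! j) (G ! j) = 2 * min (ts ! j) (CARD('n) - ts ! j)"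
proof -
  let ?d = "\<lambda>k. subspace_dist (F ! k) (G ! k)"
  let ?b = "\<lambda>k. 2 * min (ts ! k) (CARD('n) - ts ! k)"
  have code: "flag_code ts C"
    using opt by (simp add: optimum_distance_flag_code_def)
  then have flags: "is_flag ts F" "is_flag ts G"
    using assms(2,3) by (auto simp: flag_code_def)
  have le: "?d k \<le> ?b k" if "k \<in> {..<length ts}" for k
    using is_flag_subspace_dist_le[OF flags] that by simp
  have "(\<Sum>k<length ts. ?b k) = code_dist ts C"
    using opt by (simp add: optimum_distance_flag_code_def sum_distrib_left min_complement_eq_if)
  also have "\<dots> \<le> (\<Sum>k<length ts. ?d k)"
    using code_dist_le_flag_dist[OF finite_flag_code[OF code] assms(2-4)]
    by (simp add: flag_dist_def)
  finally have "(\<Sum>k<length ts. ?d k) = (\<Sum>k<length ts. ?b k)"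
    using sum_mono[OF le] by (rule antisym[rotated])
  then show ?thesis
    by (rule sum_mono_inv[where f = ?d and g = ?b]) (use le assms(5) in auto)
qed

lemma set_subspace_dist_eqI:
  assumes "U \<in> D" "V \<in> D" "U \<noteq> V"
    and "\<And>U V. U \<in> D \<Longrightarrow> V \<in> D \<Longrightarrow> U \<noteq> V \<Longrightarrow> subspace_dist U V = d"
  shows "set_subspace_dist D = d"
proof -
  have "{subspace_dist U V | U V. U \<in> D \<and> V \<in> D \<and> U \<noteq> V} = {d}"
    using assms by blast
  then show ?thesis
    using assms(1-3) by (auto simp: set_subspace_dist_def)
qed

theorem proposition3p7:
  fixes C :: "('a::{finite,field} ^ 'n) set list set" and ts :: "nat list"
  assumes "CARD('n) > 1"
    and "optimum_distance_flag_code ts C"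
    and "i < length ts"
  shows "set_subspace_dist (projected_code C i) = min (2 * ts ! i) (2 * (CARD('n) - ts ! i))"
proof -
  have code: "flag_code ts C"
    using assms(2) by (simp add: optimum_distance_flag_code_def)
  then obtain F G where FG: "F \<in> C" "G \<in> C" "F \<noteq> G"
    by (auto simp: flag_code_def)
  have "0 < ts ! i" "ts ! i < CARD('n)"
    using code assms(3) by (auto simp: flag_code_def flag_type_def)
  then have "subspace_dist (F ! i) (G ! i) \<noteq> 0"
    using optimum_distance_flag_code_subspace_dist[OF assms(2) FG assms(3)] by simp
  moreover have "vec.subspace (F ! i)"
    using code FG(1) assms(3) by (auto simp: flag_code_def is_flag_def)
  ultimately have distinct: "F ! i \<noteq> G ! i"
    using subspace_dist_self by metis
  have proj: "F ! i \<in> projected_code C i" "G ! i \<in> projected_code C i"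
    using FG(1,2) by (simp_all add: projected_code_def)
  show ?thesis
  proof (rule set_subspace_dist_eqI[OF proj distinct])
    fix U V
    assume "U \<in> projected_code C i" "V \<in> projected_code C i" "U \<noteq> V"
    then obtain F' G' where F'G': "F' \<in> C" "G' \<in> C" "U = F' ! i" "V = G' ! i"
      unfolding projected_code_def by blast
    with \<open>U \<noteq> V\<close> have "F' \<noteq> G'"
      by blast
    with F'G' show "subspace_dist U V = min (2 * ts ! i) (2 * (CARD('n) - ts ! i))"
      using optimum_distance_flag_code_subspace_dist[OF assms(2) F'G'(1,2) _ assms(3)] by simp
  qed
qed

end
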